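(* Let $p$ be a pattern graph, $d$ a data graph, $V_c(p)$ a vertex cover of $p$, and $s: V_c(p)\to V(d)$ a skeleton. Let $M|s=\{f\in M(p,d) : f(u)=s(u)\text{ for all }u\in V_c(p)\}$. Suppose $|V_c(p)|=a$, $|V(p)\setminus V_c(p)|=b$, and $|M|s|=c\ge 1$. Then the compressed form $f|s$ of $M|s$ uses at least $a\cdot(c-1)$ fewer integers of storage than storing the $c$ matches of $M|s$ in plain form; that is, $c(a+b)-\mathrm{size}(f|s)\ge a(c-1)$.
   Context: Graphs are finite, simple and undirected. $p$ (the pattern) and $d$ (the data graph) are graphs, the vertices of $d$ carry a fixed total order, and $\mathbf{ord}$ is a set of ordered pairs of vertices of $p$ (a symmetry-breaking partial order). A match of $p$ in $d$ is an injective map $f:V(p)\to V(d)$ such that $(f(x),f(y))\in E(d)$ for every edge $(x,y)\in E(p)$ and $f(x)<f(y)$ for every $(x,y)\in\mathbf{ord}$; $M(p,d)$ is the set of all matches. A vertex cover of $p$ is a set $V_c(p)\subseteq V(p)$ containing at least one endpoint of every edge of $p$; a skeleton is a map $s:V_c(p)\to V(d)$. Storage model: each vertex occupies one integer; the plain form of a match stores $|V(p)|$ integers. The compressed form $f|s$ of $M|s$ stores $s$ (i.e. $|V_c(p)|$ integers) and, for each $v\in V(p)\setminus V_c(p)$, the set $f|s(v)=\{f(v): f\in M|s\}$ (i.e. $|f|s(v)|$ integers); so $\mathrm{size}(f|s)=|V_c(p)|+\sum_{v\in V(p)\setminus V_c(p)}|f|s(v)|$. *)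

theory Defs
  imports Main "HOL-Library.FuncSet"
begin

definition simple_graph :: "'a set \<Rightarrow> ('a \<times> 'a) set \<Rightarrow> bool" where
  "simple_graph V E \<longleftrightarrow> finite V \<and> E \<subseteq> V \<times> V \<and> sym E \<and> irrefl E"

text \<open>Matches of pattern (Vp,Ep) in data graph (Vd,Ed) w.r.t. symmetry-breaking pairs ord.
  Maps are taken extensional (undefined outside Vp) so a match is exactly a map on V(p).\<close>
definition matches ::
  "'a set \<Rightarrow> ('a \<times> 'a) set \<Rightarrow> ('a \<times> 'a) set \<Rightarrow> 'b::linorder set \<Rightarrow> ('b \<times> 'b) set \<Rightarrow> ('a \<Rightarrow> 'b) set" where
  "matches Vp Ep ord Vd Ed =
     {f. f \<in> Vp \<rightarrow>\<^sub>E Vd \<and> inj_on f Vp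
         \<and> (\<forall>(x,y)\<in>Ep. (f x, f y) \<in> Ed)
         \<and> (\<forall>(x,y)\<in>ord. f x < f y)}"

definition vertex_cover :: "'a set \<Rightarrow> ('a \<times> 'a) set \<Rightarrow> 'a set \<Rightarrow> bool" where
  "vertex_cover V E C \<longleftrightarrow> C \<subseteq> V \<and> (\<forall>(x,y)\<in>E. x \<in> C \<or> y \<in> C)"

definition matches_skel ::
  "'a set \<Rightarrow> ('a \<times> 'a) set \<Rightarrow> ('a \<times> 'a) set \<Rightarrow> 'b::linorder set \<Rightarrow> ('b \<times> 'b) set
    \<Rightarrow> 'a set \<Rightarrow> ('a \<Rightarrow> 'b) \<Rightarrow> ('a \<Rightarrow> 'b) set" where
  "matches_skel Vp Ep ord Vd Ed Vc s = {f \<in> matches Vp Ep ord Vd Ed. \<forall>u\<in>Vc. f u = s u}"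

definition compressed_size :: "'a set \<Rightarrow> 'a set \<Rightarrow> ('a \<Rightarrow> 'b) set \<Rightarrow> nat" where
  "compressed_size Vp Vc Ms = card Vc + (\<Sum>v\<in>Vp - Vc. card ((\<lambda>f. f v) ` Ms))"

end

theory Submission
  imports Defs
begin

text \<open>Each non-cover vertex v stores the set of values f v over the c matches, which has at most
  c elements, so the compressed form needs at most a + b c integers against c (a + b) for the plain
  form. Neither the graph structure nor the skeleton plays a role: the bound holds for every
  finite set of maps.\<close>

lemma compressed_size_le:
  assumes "finite Ms"
  shows "compressed_size Vp Vc Ms \<le> card Vc + card (Vp - Vc) * card Ms"
proof -
  have "(\<Sum>v\<in>Vp - Vc. card ((\<lambda>f. f v) ` Ms)) \<le> (\<Sum>v\<in>Vp - Vc. card Ms)"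
    by (rule sum_mono) (rule card_image_le[OF assms])
  also have "\<dots> = card (Vp - Vc) * card Ms"
    by simp
  finally show ?thesis
    unfolding compressed_size_def by simp
qed

theorem mainTheorem1:
  fixes Vp :: "'a set" and Ep ord :: "('a \<times> 'a) set"
    and Vd :: "'b::linorder set" and Ed :: "('b \<times> 'b) set"
    and Vc :: "'a set" and s :: "'a \<Rightarrow> 'b" and a b c :: nat
  assumes "simple_graph Vp Ep" and "simple_graph Vd Ed"
    and "ord \<subseteq> Vp \<times> Vp"
    and "vertex_cover Vp Ep Vc"
    and "s \<in> Vc \<rightarrow> Vd"
    and "card Vc = a" and "card (Vp - Vc) = b"
    and "card (matches_skel Vp Ep ord Vd Ed Vc s) = c" and "c \<ge> 1"
  shows "int c * int (a + b) - int (compressed_size Vp Vc (matches_skel Vp Ep ord Vd Ed Vc s))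
           \<ge> int a * (int c - 1)"
proof -
  let ?M = "matches_skel Vp Ep ord Vd Ed Vc s"
  have "finite ?M"
    using assms(8,9) card.infinite by fastforce
  then have "compressed_size Vp Vc ?M \<le> a + b * c"
    using compressed_size_le assms(6-8) by metis
  then have "int (compressed_size Vp Vc ?M) \<le> int a + int b * int c"
    by (metis of_nat_add of_nat_mult of_nat_le_iff)
  then show ?thesis
    by (simp add: algebra_simps)
qed

end
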